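(* Let $k$ be a positive integer and $G$ a graph. Then $\gamma_{P,k}(G-e)>\gamma_{P,k}(G)$ for every edge $e$ of $G$ if and only if $G$ is a disjoint union of $k$-generalized spiders.
   Context: All graphs are finite and simple; $G-e$ is obtained by deleting the edge $e$. A $k$-generalized spider is a tree with at most one vertex of degree $k+2$ or more. $N_G[v]$ is the closed neighbourhood of $v$, and $N_G[S]$ the union of closed neighbourhoods of vertices of $S$. For $S\subseteq V(G)$, define $\mathcal{P}^{0}_{G,k}(S)=N_G[S]$ and $\mathcal{P}^{i+1}_{G,k}(S)=\bigcup\{N_G[v] : v\in \mathcal{P}^{i}_{G,k}(S),\ |N_G[v]\setminus \mathcal{P}^{i}_{G,k}(S)|\le k\}$; these increase and stabilize to $\mathcal{P}^{\infty}_{G,k}(S)$. $S$ is a $k$-power dominating set if $\mathcal{P}^{\infty}_{G,k}(S)=V(G)$; $\gamma_{P,k}(G)$ is the minimum size of such a set. *)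

theory Defs
  imports Main
begin

definition simple_graph :: "'a set \<Rightarrow> 'a set set \<Rightarrow> bool" where
  "simple_graph V E \<longleftrightarrow> finite V \<and> (\<forall>e\<in>E. e \<subseteq> V \<and> card e = 2)"

definition adj :: "'a set set \<Rightarrow> 'a \<Rightarrow> 'a \<Rightarrow> bool" where
  "adj E u v \<longleftrightarrow> {u, v} \<in> E"

definition del_edge :: "'a set set \<Rightarrow> 'a set \<Rightarrow> 'a set set" where
  "del_edge E e = E - {e}"

definition cnbhd :: "'a set set \<Rightarrow> 'a \<Rightarrow> 'a set" where
  "cnbhd E v = insert v {u. adj E v u}"

definition cnbhd_set :: "'a set set \<Rightarrow> 'a set \<Rightarrow> 'a set" where
  "cnbhd_set E S = (\<Union>v\<in>S. cnbhd E v)"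

primrec pow_obs :: "'a set set \<Rightarrow> nat \<Rightarrow> nat \<Rightarrow> 'a set \<Rightarrow> 'a set" where
  "pow_obs E k 0 S = cnbhd_set E S"
| "pow_obs E k (Suc i) S =
     \<Union>{cnbhd E v | v. v \<in> pow_obs E k i S \<and> card (cnbhd E v - pow_obs E k i S) \<le> k}"

definition pow_obs_inf :: "'a set set \<Rightarrow> nat \<Rightarrow> 'a set \<Rightarrow> 'a set" where
  "pow_obs_inf E k S = (\<Union>i. pow_obs E k i S)"

definition k_pds :: "'a set \<Rightarrow> 'a set set \<Rightarrow> nat \<Rightarrow> 'a set \<Rightarrow> bool" where
  "k_pds V E k S \<longleftrightarrow> S \<subseteq> V \<and> pow_obs_inf E k S = V"

definition gamma_pk :: "'a set \<Rightarrow> 'a set set \<Rightarrow> nat \<Rightarrow> nat" where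
  "gamma_pk V E k = (LEAST n. \<exists>S. k_pds V E k S \<and> card S = n)"

definition degree :: "'a set set \<Rightarrow> 'a \<Rightarrow> nat" where
  "degree E v = card {u. adj E v u}"

definition graph_connected :: "'a set \<Rightarrow> 'a set set \<Rightarrow> bool" where
  "graph_connected V E \<longleftrightarrow> (\<forall>u\<in>V. \<forall>v\<in>V. (adj E)\<^sup>*\<^sup>* u v)"

definition has_cycle :: "'a set \<Rightarrow> 'a set set \<Rightarrow> bool" where
  "has_cycle V E \<longleftrightarrow> (\<exists>xs. length xs \<ge> 3 \<and> distinct xs \<and> set xs \<subseteq> V \<and>
      (\<forall>i < length xs. adj E (xs ! i) (xs ! ((i + 1) mod length xs))))"

definition is_tree :: "'a set \<Rightarrow> 'a set set \<Rightarrow> bool" where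
  "is_tree V E \<longleftrightarrow> simple_graph V E \<and> V \<noteq> {} \<and> graph_connected V E \<and> \<not> has_cycle V E"

definition gen_spider :: "nat \<Rightarrow> 'a set \<Rightarrow> 'a set set \<Rightarrow> bool" where
  "gen_spider k V E \<longleftrightarrow> is_tree V E \<and> card {v\<in>V. degree E v \<ge> k + 2} \<le> 1"

definition induced_edges :: "'a set set \<Rightarrow> 'a set \<Rightarrow> 'a set set" where
  "induced_edges E C = {e\<in>E. e \<subseteq> C}"

definition disjoint_union_of_spiders :: "nat \<Rightarrow> 'a set \<Rightarrow> 'a set set \<Rightarrow> bool" where
  "disjoint_union_of_spiders k V E \<longleftrightarrow>
     (\<exists>P. \<Union>P = V \<and> (\<forall>C\<in>P. \<forall>D\<in>P. C \<noteq> D \<longrightarrow> C \<inter> D = {}) \<and>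
          (\<forall>e\<in>E. \<exists>C\<in>P. e \<subseteq> C) \<and>
          (\<forall>C\<in>P. gen_spider k C (induced_edges E C)))"

end

theory Submission
  imports Defs "HOL-Library.Transitive_Closure_Table"
begin

(* If G is a disjoint union of k-generalized spiders, choosing in each spider its vertex of
   degree at least k + 2 (or any vertex) gives a k-power dominating set: observation spreads
   outwards because every other vertex, once observed, has at most k unobserved neighbours.
   Every k-power dominating set meets every component, so gamma_{P,k}(G) is the number of
   components, and deleting an edge of a tree creates a new component.

   Conversely, fix a minimum k-power dominating set S of an edge-critical graph and let each vertex
   outside S choose a parent whose neighbourhood observed it. An edge joining no vertex to its
   parent could be deleted while S still observes everything, so every edge is a parent edge.
   Since the observation time drops along parents, the graph is a forest whose components each
   contain exactly one vertex of S; and a vertex outside S of degree at least k + 2 would have to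
   observe its k + 1 or more children in a single step. *)

section \<open>Adjacency, components and cycles\<close>

lemma adj_sym: "adj E u v \<longleftrightarrow> adj E v u"
  by (simp add: adj_def insert_commute)

lemma adj_imp_in_vertices: "simple_graph V E \<Longrightarrow> adj E u v \<Longrightarrow> u \<in> V \<and> v \<in> V"
  unfolding simple_graph_def adj_def by blast

lemma finite_neighbours: "simple_graph V E \<Longrightarrow> finite {u. adj E v u}"
  by (metis (no_types, lifting) adj_imp_in_vertices finite_subset mem_Collect_eq simple_graph_def subsetI)

lemma finite_cnbhd: "simple_graph V E \<Longrightarrow> finite (cnbhd E v)"
  by (simp add: cnbhd_def finite_neighbours)

lemma rtranclp_adj_sym: "(adj E)\<^sup>*\<^sup>* x y \<Longrightarrow> (adj E)\<^sup>*\<^sup>* y x"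
  using symp_rtranclp[of "adj E"] by (simp add: symp_def adj_sym)

lemma rtranclp_adj_in_vertices: "(adj E)\<^sup>*\<^sup>* u v \<Longrightarrow> simple_graph V E \<Longrightarrow> u \<in> V \<Longrightarrow> v \<in> V"
  by (induction rule: rtranclp_induct) (auto dest: adj_imp_in_vertices)

definition adj_closed :: "'a set set \<Rightarrow> 'a set \<Rightarrow> bool" where
  "adj_closed E X \<longleftrightarrow> (\<forall>x y. x \<in> X \<longrightarrow> adj E x y \<longrightarrow> y \<in> X)"

lemma adj_closed_rtranclp: "(adj E)\<^sup>*\<^sup>* x y \<Longrightarrow> adj_closed E X \<Longrightarrow> x \<in> X \<Longrightarrow> y \<in> X"
  unfolding adj_closed_def by (induction rule: rtranclp_induct) auto

definition component :: "'a set set \<Rightarrow> 'a \<Rightarrow> 'a set" where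
  "component E v = {u. (adj E)\<^sup>*\<^sup>* v u}"

lemma in_component_self: "v \<in> component E v"
  by (simp add: component_def)

lemma adj_closed_component: "adj_closed E (component E v)"
  unfolding adj_closed_def component_def by (auto intro: rtranclp.rtrancl_into_rtrancl)

lemma component_eq: "u \<in> component E v \<Longrightarrow> u \<in> component E w \<Longrightarrow> component E v = component E w"
  unfolding component_def
  by (metis (no_types, lifting) Collect_cong mem_Collect_eq rtranclp_adj_sym rtranclp_trans)

lemma rtranclp_in_component: "x \<in> component E v \<Longrightarrow> y \<in> component E v \<Longrightarrow> (adj E)\<^sup>*\<^sup>* x y"
  unfolding component_def by (meson mem_Collect_eq rtranclp_adj_sym rtranclp_trans)

lemma adj_induced_edges: "adj (induced_edges E C) x y \<longleftrightarrow> adj E x y \<and> x \<in> C \<and> y \<in> C"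
  unfolding adj_def induced_edges_def by simp

lemma rtranclp_adj_induced_edges:
  assumes "adj_closed E C" "(adj E)\<^sup>*\<^sup>* x y" "x \<in> C"
  shows "(adj (induced_edges E C))\<^sup>*\<^sup>* x y"
  using assms(2,3)
proof (induction rule: rtranclp_induct)
  case (step y z)
  then have "y \<in> C" "z \<in> C"
    using adj_closed_rtranclp[OF _ assms(1)] by (meson rtranclp.rtrancl_into_rtrancl)+
  then show ?case using step by (auto simp: adj_induced_edges intro: rtranclp.rtrancl_into_rtrancl)
qed simp

lemma degree_induced_edges:
  assumes "adj_closed E C" "v \<in> C"
  shows "degree (induced_edges E C) v = degree E v"
proof -
  have "{u. adj (induced_edges E C) v u} = {u. adj E v u}"
    using assms by (auto simp: adj_closed_def adj_induced_edges)
  then show ?thesis by (simp add: degree_def)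
qed

lemma has_cycle_induced_edges: "has_cycle C (induced_edges E C) \<Longrightarrow> C \<subseteq> V \<Longrightarrow> has_cycle V E"
  unfolding has_cycle_def by (meson adj_induced_edges order_trans)

lemma has_cycleE:
  assumes "has_cycle V E"
  obtains C where "finite C" "C \<noteq> {}"
    and "\<And>x. x \<in> C \<Longrightarrow> \<exists>y\<in>C. \<exists>z\<in>C. y \<noteq> z \<and> adj E x y \<and> adj E x z"
proof -
  obtain xs where xs: "length xs \<ge> 3" "distinct xs"
    and cyc: "\<And>i. i < length xs \<Longrightarrow> adj E (xs ! i) (xs ! ((i + 1) mod length xs))"
    using assms unfolding has_cycle_def by blast
  let ?L = "length xs"
  have "\<exists>y\<in>set xs. \<exists>z\<in>set xs. y \<noteq> z \<and> adj E (xs ! m) y \<and> adj E (xs ! m) z" if m: "m < ?L" for m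
  proof -
    define p where "p = (if m = 0 then ?L - 1 else m - 1)"
    define q where "q = (m + 1) mod ?L"
    have p: "p < ?L" "(p + 1) mod ?L = m"
      using m xs(1) by (auto simp: p_def)
    have q: "q < ?L" "p \<noteq> q"
      using m xs(1) by (auto simp: p_def q_def mod_if)
    have "adj E (xs ! m) (xs ! p)"
      using cyc[OF p(1)] p(2) adj_sym by metis
    moreover have "adj E (xs ! m) (xs ! q)" using cyc[OF m] q_def by simp
    moreover have "xs ! p \<noteq> xs ! q" using xs(2) p(1) q by (simp add: nth_eq_iff_index_eq)
    ultimately show ?thesis using p(1) q(1) by (meson nth_mem)
  qed
  moreover have "set xs \<noteq> {}" using xs(1) by auto
  ultimately show thesis using that[of "set xs"] by (metis finite_set in_set_conv_nth)
qed

lemma acyclic_delete_edge_disconnects: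
  assumes G: "simple_graph V E" and acyclic: "\<not> has_cycle V E" and e: "{a, b} \<in> E"
  shows "\<not> (adj (E - {{a, b}}))\<^sup>*\<^sup>* a b"
proof
  let ?R = "adj (E - {{a, b}})"
  assume "?R\<^sup>*\<^sup>* a b"
  then obtain xs where path: "rtrancl_path ?R a xs b" and dist: "distinct (a # xs)"
    by (metis rtranclp_eq_rtrancl_path rtrancl_path_distinct)
  have "a \<noteq> b" using G e unfolding simple_graph_def by fastforce
  then have "xs \<noteq> []" using path by (auto elim: rtrancl_path.cases)
  have "xs \<noteq> [b]" using path by (auto simp: adj_def elim!: rtrancl_path.cases)
  then have len: "length (a # xs) \<ge> 3"
    using \<open>xs \<noteq> []\<close> rtrancl_path_last[OF path] by (cases xs rule: rev_cases) (auto simp: Suc_le_eq)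
  have "adj E ((a # xs) ! i) ((a # xs) ! ((i + 1) mod length (a # xs)))"
    if i: "i < length (a # xs)" for i
  proof (cases "i < length xs")
    case True
    then show ?thesis using rtrancl_path_nth[OF path True] by (simp add: adj_def)
  next
    case False
    then have "i = length xs" using i by simp
    moreover have "(a # xs) ! length xs = b"
      using \<open>xs \<noteq> []\<close> rtrancl_path_last[OF path] by (cases xs rule: rev_cases) auto
    ultimately show ?thesis using e by (simp add: adj_def insert_commute)
  qed
  moreover have "set (a # xs) \<subseteq> V"
    using rtrancl_path_Range[OF path] adj_imp_in_vertices[OF G] e by (fastforce simp: adj_def)
  ultimately have "has_cycle V E" unfolding has_cycle_def using len dist by blast
  then show False using acyclic by contradiction
qed

lemma cnbhd_mono: "E' \<subseteq> E \<Longrightarrow> cnbhd E' v \<subseteq> cnbhd E v"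
  by (auto simp: cnbhd_def adj_def)

lemma simple_graph_mono: "simple_graph V E \<Longrightarrow> E' \<subseteq> E \<Longrightarrow> simple_graph V E'"
  by (auto simp: simple_graph_def)

lemma simple_graph_del_edge: "simple_graph V E \<Longrightarrow> simple_graph V (del_edge E e)"
  by (rule simple_graph_mono) (auto simp: del_edge_def)

lemma adj_closed_del_edge: "adj_closed E X \<Longrightarrow> adj_closed (del_edge E e) X"
  by (simp add: adj_closed_def adj_def del_edge_def)

lemma induced_edges_del_edge: "induced_edges (del_edge E e) C = induced_edges E C - {e}"
  by (auto simp: induced_edges_def del_edge_def)

section \<open>Power domination\<close>

lemma cnbhd_subset_pow_obs_0: "s \<in> S \<Longrightarrow> cnbhd E s \<subseteq> pow_obs E k 0 S"
  by (auto simp: cnbhd_set_def)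

lemma mem_pow_obs_0: "s \<in> S \<Longrightarrow> s \<in> pow_obs E k 0 S"
  using cnbhd_subset_pow_obs_0 by (fastforce simp: cnbhd_def)

lemma cnbhd_subset_pow_obs_Suc:
  "v \<in> pow_obs E k i S \<Longrightarrow> card (cnbhd E v - pow_obs E k i S) \<le> k \<Longrightarrow> cnbhd E v \<subseteq> pow_obs E k (Suc i) S"
  by auto

lemma mem_pow_obs_SucE:
  assumes "w \<in> pow_obs E k (Suc i) S"
  obtains v where "v \<in> pow_obs E k i S" "card (cnbhd E v - pow_obs E k i S) \<le> k" "w \<in> cnbhd E v"
  using assms by auto

(* The successor equation of pow_obs lets the simplifier loose on the cardinality conditions;
   from here on it is only used through the two lemmas above. *)
declare pow_obs.simps(2) [simp del]

lemma cnbhd_subset_pow_obs_Suc_if_observed: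
  "v \<in> pow_obs E k i S \<Longrightarrow> cnbhd E v \<subseteq> pow_obs E k i S \<Longrightarrow> cnbhd E v \<subseteq> pow_obs E k (Suc i) S"
proof -
  assume "v \<in> pow_obs E k i S" "cnbhd E v \<subseteq> pow_obs E k i S"
  moreover from this(2) have "cnbhd E v - pow_obs E k i S = {}" by blast
  ultimately show ?thesis by (intro cnbhd_subset_pow_obs_Suc) (simp_all only: card.empty zero_le)
qed

lemma pow_obs_Suc_mono: "pow_obs E k i S \<subseteq> pow_obs E k (Suc i) S"
proof (induction i)
  case 0
  show ?case
  proof
    fix w assume "w \<in> pow_obs E k 0 S"
    then obtain s where "s \<in> S" "w \<in> cnbhd E s" by (auto simp: cnbhd_set_def)
    then show "w \<in> pow_obs E k (Suc 0) S"
      by (meson subsetD cnbhd_subset_pow_obs_Suc_if_observed mem_pow_obs_0 cnbhd_subset_pow_obs_0)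
  qed
next
  case (Suc i)
  show ?case
  proof
    fix w assume "w \<in> pow_obs E k (Suc i) S"
    then obtain v where v: "v \<in> pow_obs E k i S" "card (cnbhd E v - pow_obs E k i S) \<le> k" "w \<in> cnbhd E v"
      by (rule mem_pow_obs_SucE)
    then have "v \<in> pow_obs E k (Suc i) S" "cnbhd E v \<subseteq> pow_obs E k (Suc i) S"
      using Suc.IH by (auto simp only: cnbhd_subset_pow_obs_Suc)
    then show "w \<in> pow_obs E k (Suc (Suc i)) S"
      using v(3) cnbhd_subset_pow_obs_Suc_if_observed by (meson subsetD)
  qed
qed

lemma pow_obs_mono: "i \<le> j \<Longrightarrow> pow_obs E k i S \<subseteq> pow_obs E k j S"
  by (rule lift_Suc_mono_le[of "\<lambda>i. pow_obs E k i S", OF pow_obs_Suc_mono])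

lemma pow_obs_subset:
  assumes G: "simple_graph V E" and "S \<subseteq> V"
  shows "pow_obs E k i S \<subseteq> V"
proof -
  have cnbhd_V: "cnbhd E v \<subseteq> V" if "v \<in> V" for v
    using that adj_imp_in_vertices[OF G] by (auto simp: cnbhd_def)
  show ?thesis
    by (induction i) (use \<open>S \<subseteq> V\<close> cnbhd_V in \<open>auto simp: cnbhd_set_def elim!: mem_pow_obs_SucE\<close>)
qed

lemma k_pdsI:
  assumes "simple_graph V E" "S \<subseteq> V" "\<And>v. v \<in> V \<Longrightarrow> \<exists>i. v \<in> pow_obs E k i S"
  shows "k_pds V E k S"
proof -
  have "(\<Union>i. pow_obs E k i S) \<subseteq> V"
    using pow_obs_subset[OF assms(1,2)] by (rule UN_least)
  moreover have "V \<subseteq> (\<Union>i. pow_obs E k i S)"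
    using assms(3) by (meson UN_iff UNIV_I subsetI)
  ultimately have "(\<Union>i. pow_obs E k i S) = V" ..
  then show ?thesis using assms(2) by (simp add: k_pds_def pow_obs_inf_def)
qed

lemma k_pds_vertices: "simple_graph V E \<Longrightarrow> k_pds V E k V"
  by (rule k_pdsI) (auto intro: mem_pow_obs_0)

lemma gamma_pk_le: "k_pds V E k S \<Longrightarrow> gamma_pk V E k \<le> card S"
  unfolding gamma_pk_def by (rule Least_le) blast

lemma gamma_pk_attained:
  assumes "simple_graph V E"
  obtains S where "k_pds V E k S" "card S = gamma_pk V E k"
proof -
  have "\<exists>S. k_pds V E k S \<and> card S = gamma_pk V E k"
    unfolding gamma_pk_def by (rule LeastI_ex) (use k_pds_vertices[OF assms] in blast)
  then show thesis using that by blast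
qed

lemma k_pds_meets_adj_closed:
  assumes S: "k_pds V E k S" and X: "X \<subseteq> V" "X \<noteq> {}" "adj_closed E X"
  shows "S \<inter> X \<noteq> {}"
proof
  assume SX: "S \<inter> X = {}"
  have "cnbhd E v \<inter> X = {}" if "v \<notin> X" for v
  proof -
    have "v \<in> X" if "u \<in> X" "adj E v u" for u
      using that X(3) adj_sym unfolding adj_closed_def by metis
    then show ?thesis using that by (auto simp: cnbhd_def)
  qed
  then have "pow_obs E k i S \<inter> X = {}" for i
    using SX by (induction i) (auto simp: cnbhd_set_def elim!: mem_pow_obs_SucE)
  then show False using S X(1,2) unfolding k_pds_def pow_obs_inf_def by blast
qed

lemma card_le_gamma_pk_if_adj_closed_disjoint:
  assumes G: "simple_graph V E"
    and F: "\<And>X. X \<in> F \<Longrightarrow> X \<subseteq> V \<and> X \<noteq> {} \<and> adj_closed E X"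
    and disjoint: "\<And>X Y. X \<in> F \<Longrightarrow> Y \<in> F \<Longrightarrow> X \<noteq> Y \<Longrightarrow> X \<inter> Y = {}"
  shows "card F \<le> gamma_pk V E k"
proof -
  obtain S where S: "k_pds V E k S" "card S = gamma_pk V E k"
    using gamma_pk_attained[OF G] .
  define pick where "pick X = (SOME x. x \<in> S \<inter> X)" for X
  have pick: "pick X \<in> S \<inter> X" if "X \<in> F" for X
    unfolding pick_def using k_pds_meets_adj_closed[OF S(1)] F[OF that] by (metis some_in_eq)
  have "inj_on pick F"
  proof (rule inj_onI)
    fix X Y assume "X \<in> F" "Y \<in> F" "pick X = pick Y"
    then show "X = Y" using pick[of X] pick[of Y] disjoint[of X Y] by auto
  qed
  moreover have "finite S"
    using S(1) G finite_subset unfolding k_pds_def simple_graph_def by blast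
  moreover have "pick ` F \<subseteq> S" using pick by auto
  ultimately have "card F \<le> card S" by (metis card_inj_on_le)
  then show ?thesis using S(2) by simp
qed

lemma k_pds_if_low_degree_outside:
  assumes G: "simple_graph V E" and "S \<subseteq> V"
    and low: "\<And>v. v \<in> V \<Longrightarrow> v \<notin> S \<Longrightarrow> degree E v \<le> k + 1"
    and reach: "\<And>v. v \<in> V \<Longrightarrow> \<exists>s\<in>S. (adj E)\<^sup>*\<^sup>* s v"
  shows "k_pds V E k S"
proof (rule k_pdsI[OF G \<open>S \<subseteq> V\<close>])
  have "\<exists>i. v \<in> pow_obs E k i S \<and> cnbhd E v \<subseteq> pow_obs E k (Suc i) S"
    if "(adj E)\<^sup>*\<^sup>* s v" "s \<in> S" for s v
    using that
  proof (induction rule: rtranclp_induct)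
    case base
    have "cnbhd E s \<subseteq> pow_obs E k (Suc 0) S"
      using cnbhd_subset_pow_obs_0[OF base] pow_obs_Suc_mono by (rule order_trans)
    then show ?case using mem_pow_obs_0[OF base] by blast
  next
    case (step u v)
    then obtain i where i: "u \<in> pow_obs E k i S" "cnbhd E u \<subseteq> pow_obs E k (Suc i) S"
      by blast
    have v: "v \<in> pow_obs E k (Suc i) S"
      using i(2) step(2) by (auto simp: cnbhd_def)
    have "cnbhd E v \<subseteq> pow_obs E k (Suc (Suc i)) S"
    proof (cases "v \<in> S")
      case True
      then show ?thesis
        using cnbhd_subset_pow_obs_0 pow_obs_mono[of 0 "Suc (Suc i)"] by (meson order_trans zero_le)
    next
      case False
      have "u \<in> pow_obs E k (Suc i) S"
        using pow_obs_Suc_mono i(1) by (rule subsetD)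
      moreover have "adj E v u" using step(2) adj_sym by metis
      ultimately have "cnbhd E v - pow_obs E k (Suc i) S \<subseteq> {y. adj E v y} - {u}"
        using v by (auto simp: cnbhd_def)
      then have "card (cnbhd E v - pow_obs E k (Suc i) S) \<le> card ({y. adj E v y} - {u})"
        using finite_neighbours[OF G] by (intro card_mono) auto
      also have "\<dots> = degree E v - 1"
        using \<open>adj E v u\<close> finite_neighbours[OF G] by (simp add: degree_def)
      also have "\<dots> \<le> k"
        using low[OF _ False] adj_imp_in_vertices[OF G step(2)] by fastforce
      finally show ?thesis by (rule cnbhd_subset_pow_obs_Suc[OF v])
    qed
    then show ?case using v by blast
  qed
  then show "\<exists>i. v \<in> pow_obs E k i S" if "v \<in> V" for v
    using reach[OF that] by blast
qed

section \<open>Disjoint unions of spiders are edge-critical\<close>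

locale spider_partition =
  fixes k :: nat and V :: "'a set" and E :: "'a set set" and P :: "'a set set"
  assumes graph: "simple_graph V E"
    and cover: "\<Union>P = V"
    and disjoint: "\<And>C D. C \<in> P \<Longrightarrow> D \<in> P \<Longrightarrow> C \<noteq> D \<Longrightarrow> C \<inter> D = {}"
    and edge_in_block: "\<And>e. e \<in> E \<Longrightarrow> \<exists>C\<in>P. e \<subseteq> C"
    and spider: "\<And>C. C \<in> P \<Longrightarrow> gen_spider k C (induced_edges E C)"
begin

lemma block_tree: "C \<in> P \<Longrightarrow> is_tree C (induced_edges E C)"
  using spider by (simp add: gen_spider_def)

lemma finite_blocks: "finite P"
proof -
  have "P \<subseteq> Pow V" using cover by blast
  then show ?thesis using graph by (meson finite_Pow_iff finite_subset simple_graph_def)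
qed

lemma adj_closed_block:
  assumes "C \<in> P" shows "adj_closed E C"
  unfolding adj_closed_def
proof (intro allI impI)
  fix x y assume "x \<in> C" "adj E x y"
  then obtain D where "D \<in> P" "{x, y} \<subseteq> D" using edge_in_block[of "{x, y}"] by (auto simp: adj_def)
  then show "y \<in> C" using disjoint[OF assms] \<open>x \<in> C\<close> by blast
qed

lemma block_center:
  assumes "C \<in> P"
  shows "\<exists>c\<in>C. \<forall>v\<in>C. k + 2 \<le> degree E v \<longrightarrow> v = c"
proof -
  let ?H = "{v \<in> C. k + 2 \<le> degree E v}"
  have "C \<subseteq> V" "C \<noteq> {}" using assms cover block_tree by (auto simp: is_tree_def)
  then have "finite ?H"
    using graph finite_subset by (fastforce simp: simple_graph_def)
  moreover have "?H = {v \<in> C. degree (induced_edges E C) v \<ge> k + 2}"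
    using degree_induced_edges[OF adj_closed_block[OF assms]] by auto
  then have "card ?H \<le> 1"
    using spider[OF assms] by (simp add: gen_spider_def)
  ultimately have "\<forall>a\<in>?H. \<forall>b\<in>?H. a = b" by (simp add: card_le_Suc0_iff_eq)
  then show ?thesis using \<open>C \<noteq> {}\<close> by blast
qed

lemma gamma_pk_le_card_blocks: "gamma_pk V E k \<le> card P"
proof -
  have "\<forall>C\<in>P. \<exists>c. c \<in> C \<and> (\<forall>v\<in>C. k + 2 \<le> degree E v \<longrightarrow> v = c)"
    using block_center by blast
  then obtain center where center: "\<And>C. C \<in> P \<Longrightarrow> center C \<in> C"
    "\<And>C v. C \<in> P \<Longrightarrow> v \<in> C \<Longrightarrow> k + 2 \<le> degree E v \<Longrightarrow> v = center C"
    by (auto dest!: bchoice)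
  have "k_pds V E k (center ` P)"
  proof (rule k_pds_if_low_degree_outside[OF graph])
    show "center ` P \<subseteq> V" using center(1) cover by blast
    show "degree E v \<le> k + 1" if "v \<in> V" "v \<notin> center ` P" for v
      using that center(2) cover by fastforce
    show "\<exists>s\<in>center ` P. (adj E)\<^sup>*\<^sup>* s v" if "v \<in> V" for v
    proof -
      obtain C where C: "C \<in> P" "v \<in> C" using \<open>v \<in> V\<close> cover by blast
      then have "(adj (induced_edges E C))\<^sup>*\<^sup>* (center C) v"
        using block_tree center(1) by (simp add: is_tree_def graph_connected_def)
      then have "(adj E)\<^sup>*\<^sup>* (center C) v"
        by (rule rtranclp_mono[THEN predicate2D, rotated]) (auto simp: adj_induced_edges)
      then show ?thesis using C(1) by blast
    qed
  qed
  then have "gamma_pk V E k \<le> card (center ` P)" by (rule gamma_pk_le)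
  also have "\<dots> \<le> card P" by (rule card_image_le[OF finite_blocks])
  finally show ?thesis .
qed

lemma card_blocks_less_gamma_pk_del_edge:
  assumes "e \<in> E"
  shows "card P < gamma_pk V (del_edge E e) k"
proof -
  let ?E' = "del_edge E e"
  obtain C where C: "C \<in> P" "e \<subseteq> C" using edge_in_block[OF assms] by blast
  obtain a b where e: "e = {a, b}"
    using graph assms by (auto simp: simple_graph_def card_2_iff)
  have block: "X \<subseteq> V" "X \<noteq> {}" "adj_closed ?E' X" if "X \<in> P" for X
    using that cover block_tree adj_closed_del_edge[OF adj_closed_block[OF that]]
    by (auto simp: is_tree_def)
  have "a \<in> C" "b \<in> C" using C(2) e by auto
  define A where "A = component ?E' a"
  define B where "B = component ?E' b"
  have "A \<subseteq> C" "B \<subseteq> C"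
    using adj_closed_rtranclp[OF _ block(3)[OF C(1)]] \<open>a \<in> C\<close> \<open>b \<in> C\<close>
    by (auto simp: A_def B_def component_def)
  have "A \<inter> B = {}"
  proof (rule ccontr)
    assume "A \<inter> B \<noteq> {}"
    then obtain u where "u \<in> A" "u \<in> B" by blast
    then have "A = B" unfolding A_def B_def by (rule component_eq)
    then have "b \<in> A" using in_component_self[of b] by (simp add: B_def)
    then have "(adj ?E')\<^sup>*\<^sup>* a b" by (simp add: A_def component_def)
    then have "(adj (induced_edges E C - {{a, b}}))\<^sup>*\<^sup>* a b"
      using rtranclp_adj_induced_edges[OF block(3)[OF C(1)] _ \<open>a \<in> C\<close>]
      by (simp add: induced_edges_del_edge e)
    moreover have "\<not> (adj (induced_edges E C - {{a, b}}))\<^sup>*\<^sup>* a b"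
    proof (rule acyclic_delete_edge_disconnects)
      show "simple_graph C (induced_edges E C)" "\<not> has_cycle C (induced_edges E C)"
        using block_tree[OF C(1)] by (simp_all add: is_tree_def)
      show "{a, b} \<in> induced_edges E C" using assms C(2) e by (simp add: induced_edges_def)
    qed
    ultimately show False by contradiction
  qed
  have "a \<in> A" "b \<in> B" by (simp_all add: A_def B_def in_component_self)
  have other_blocks: "X \<inter> D = {}" if "X \<subseteq> C" "D \<in> P - {C}" for X D
    using that disjoint[OF C(1), of D] by blast
  define F where "F = insert A (insert B (P - {C}))"
  have "A \<notin> P - {C}" "B \<notin> P - {C}" "A \<noteq> B"
    using other_blocks \<open>A \<subseteq> C\<close> \<open>B \<subseteq> C\<close> \<open>a \<in> A\<close> \<open>b \<in> B\<close> \<open>A \<inter> B = {}\<close> by blast+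
  then have "card F = card P + 1"
    using card_Suc_Diff1[OF finite_blocks C(1)] finite_blocks by (simp add: F_def)
  moreover have "card F \<le> gamma_pk V ?E' k"
  proof (rule card_le_gamma_pk_if_adj_closed_disjoint[OF simple_graph_del_edge[OF graph]])
    fix X assume "X \<in> F"
    then consider "X = A" | "X = B" | "X \<in> P - {C}" unfolding F_def by blast
    then show "X \<subseteq> V \<and> X \<noteq> {} \<and> adj_closed ?E' X"
      using block[OF C(1)] block \<open>A \<subseteq> C\<close> \<open>B \<subseteq> C\<close> \<open>a \<in> A\<close> \<open>b \<in> B\<close>
      by cases (auto simp: A_def B_def adj_closed_component)
  next
    fix X Y assume "X \<in> F" "Y \<in> F" "X \<noteq> Y"
    then consider "X \<in> {A, B}" "Y \<in> {A, B}" | "X \<in> {A, B}" "Y \<in> P - {C}"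
      | "X \<in> P - {C}" "Y \<in> {A, B}" | "X \<in> P - {C}" "Y \<in> P - {C}"
      unfolding F_def by blast
    then show "X \<inter> Y = {}"
    proof cases
      case 1
      then show ?thesis using \<open>A \<inter> B = {}\<close> \<open>X \<noteq> Y\<close> by (auto simp: Int_commute)
    next
      case 2
      then show ?thesis using other_blocks \<open>A \<subseteq> C\<close> \<open>B \<subseteq> C\<close> by blast
    next
      case 3
      then show ?thesis using other_blocks \<open>A \<subseteq> C\<close> \<open>B \<subseteq> C\<close> by blast
    next
      case 4
      then show ?thesis using disjoint \<open>X \<noteq> Y\<close> by blast
    qed
  qed
  ultimately show ?thesis by simp
qed

end

section \<open>Edge-critical graphs are disjoint unions of spiders\<close>

lemma disjoint_union_of_spiders_if_acyclic:
  assumes graph: "simple_graph V E" and acyclic: "\<not> has_cycle V E"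
    and high: "\<And>x y. (adj E)\<^sup>*\<^sup>* x y \<Longrightarrow> x \<in> V \<Longrightarrow> k + 2 \<le> degree E x \<Longrightarrow> k + 2 \<le> degree E y
      \<Longrightarrow> x = y"
  shows "disjoint_union_of_spiders k V E"
proof -
  have component_V: "component E v \<subseteq> V" if "v \<in> V" for v
    using rtranclp_adj_in_vertices[OF _ graph that] by (auto simp: component_def)
  have "gen_spider k C (induced_edges E C)" if C: "C \<in> component E ` V" for C
  proof -
    obtain v where v: "v \<in> V" "C = component E v" using C by blast
    then have "C \<subseteq> V" "v \<in> C" using component_V in_component_self by auto
    then have "finite C" using graph finite_subset by (auto simp: simple_graph_def)
    have "simple_graph C (induced_edges E C)"
      using graph \<open>finite C\<close> by (simp add: simple_graph_def induced_edges_def)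
    moreover have "graph_connected C (induced_edges E C)"
      unfolding graph_connected_def v(2)
      by (auto intro: rtranclp_adj_induced_edges[OF adj_closed_component rtranclp_in_component])
    moreover have "\<not> has_cycle C (induced_edges E C)"
      using has_cycle_induced_edges[of C E V] \<open>C \<subseteq> V\<close> acyclic by auto
    moreover have "card {u \<in> C. k + 2 \<le> degree (induced_edges E C) u} \<le> 1"
    proof -
      let ?H = "{u \<in> C. k + 2 \<le> degree (induced_edges E C) u}"
      have "x = y" if "x \<in> ?H" "y \<in> ?H" for x y
      proof -
        have "x \<in> C" "y \<in> C" "k + 2 \<le> degree E x" "k + 2 \<le> degree E y"
          using that degree_induced_edges[OF adj_closed_component, of _ E v] v(2) by auto
        then show "x = y" using high[OF rtranclp_in_component[of x E v y]] v(2) \<open>C \<subseteq> V\<close> by auto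
      qed
      then show ?thesis using \<open>finite C\<close> by (simp add: card_le_Suc0_iff_eq)
    qed
    ultimately show ?thesis using \<open>v \<in> C\<close> by (auto simp: gen_spider_def is_tree_def)
  qed
  moreover have "\<exists>C\<in>component E ` V. e \<subseteq> C" if "e \<in> E" for e
  proof -
    obtain a b where "e = {a, b}" using graph \<open>e \<in> E\<close> by (auto simp: simple_graph_def card_2_iff)
    then have "adj E a b" "a \<in> V" using \<open>e \<in> E\<close> adj_imp_in_vertices[OF graph] by (auto simp: adj_def)
    then show ?thesis using \<open>e = {a, b}\<close> in_component_self
      by (intro bexI[of _ "component E a"]) (auto simp: component_def)
  qed
  moreover have "\<Union>(component E ` V) = V"
    using component_V in_component_self by (auto intro!: UN_I)
  moreover have "C \<inter> D = {}" if CD: "C \<in> component E ` V" "D \<in> component E ` V" "C \<noteq> D" for C D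
  proof (rule ccontr)
    assume "C \<inter> D \<noteq> {}"
    then obtain u where "u \<in> C" "u \<in> D" by blast
    moreover obtain x y where "C = component E x" "D = component E y" using CD(1,2) by blast
    ultimately show False using component_eq[of u E x y] CD(3) by simp
  qed
  ultimately show ?thesis
    unfolding disjoint_union_of_spiders_def by (intro exI[of _ "component E ` V"]) simp
qed

locale parent_forest =
  fixes V :: "'a set" and E :: "'a set set" and S :: "'a set"
    and par :: "'a \<Rightarrow> 'a" and rank :: "'a \<Rightarrow> nat"
  assumes graph: "simple_graph V E"
    and adj_par: "\<And>w. w \<in> V \<Longrightarrow> w \<notin> S \<Longrightarrow> adj E w (par w)"
    and rank_par: "\<And>w. w \<in> V \<Longrightarrow> w \<notin> S \<Longrightarrow> rank (par w) < rank w"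
    and parent_edge: "\<And>x y. adj E x y \<Longrightarrow> \<exists>w\<in>V. w \<notin> S \<and> {x, y} = {w, par w}"
begin

lemma adj_imp_eq_par:
  assumes "adj E x y" "rank y \<le> rank x"
  shows "y = par x"
proof -
  obtain w where w: "w \<in> V" "w \<notin> S" "{x, y} = {w, par w}"
    using parent_edge[OF assms(1)] by blast
  have "\<not> (x = par w \<and> y = w)" using rank_par[OF w(1,2)] assms(2) by auto
  then show ?thesis using w(3) by (auto simp: doubleton_eq_iff)
qed

lemma acyclic: "\<not> has_cycle V E"
proof
  assume "has_cycle V E"
  then obtain C where C: "finite C" "C \<noteq> {}"
    and nbrs: "\<And>x. x \<in> C \<Longrightarrow> \<exists>y\<in>C. \<exists>z\<in>C. y \<noteq> z \<and> adj E x y \<and> adj E x z"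
    by (rule has_cycleE) blast
  have "Max (rank ` C) \<in> rank ` C" using C by simp
  then obtain x where x: "x \<in> C" "rank x = Max (rank ` C)" by (metis imageE)
  have top: "rank y \<le> rank x" if "y \<in> C" for y
    using that x(2) C(1) by simp
  obtain y z where "y \<in> C" "z \<in> C" "y \<noteq> z" "adj E x y" "adj E x z"
    using nbrs[OF x(1)] by blast
  then show False using adj_imp_eq_par top by metis
qed

lemma connected_roots_eq:
  assumes "(adj E)\<^sup>*\<^sup>* s t" "s \<in> S" "t \<in> S"
  shows "s = t"
proof -
  \<comment> \<open>Following parents long enough leads every vertex to a root, and that root does not
    change along an edge.\<close>
  define step where "step w = (if w \<in> S then w else par w)" for w
  define N where "N = Max (rank ` V)"
  define root where "root = step ^^ N"
  have step_S: "(step ^^ n) s = s" if "s \<in> S" for s n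
    using that by (induction n) (simp_all add: step_def)
  have step_V: "step w \<in> V" if "w \<in> V" for w
    using that adj_imp_in_vertices[OF graph adj_par] by (simp add: step_def)
  have reach_S: "(step ^^ n) w \<in> S" if "w \<in> V" "rank w \<le> n" for w n
    using that
  proof (induction n arbitrary: w)
    case (Suc n)
    show ?case
    proof (cases "w \<in> S")
      case True
      then show ?thesis using step_S[OF True, of "Suc n"] by simp
    next
      case False
      then have "rank (step w) \<le> n" using Suc.prems rank_par[of w] by (simp add: step_def)
      then show ?thesis using Suc.IH[OF step_V[OF Suc.prems(1)]] by (simp only: funpow_Suc_right comp_apply)
    qed
  qed (use rank_par in \<open>force\<close>)
  have root_par: "root (par w) = root w" if "w \<in> V" "w \<notin> S" for w
  proof -
    have "root w \<in> S" unfolding root_def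
      using reach_S[OF that(1)] graph that(1) by (simp add: N_def simple_graph_def)
    then have "step (root w) = root w" by (simp add: step_def)
    then show ?thesis using that(2) by (simp add: root_def step_def funpow_swap1 flip: funpow_Suc_right)
  qed
  have root_adj: "root x = root y" if "adj E x y" for x y
    using parent_edge[OF that] root_par by (auto simp: doubleton_eq_iff)
  have "root s = root t"
    using assms(1) by (induction rule: rtranclp_induct) (simp_all add: root_adj)
  then show ?thesis using step_S assms(2,3) by (simp add: root_def)
qed

lemma disjoint_union_of_spiders_if_high_degree_in_roots:
  assumes "\<And>v. v \<in> V \<Longrightarrow> k + 2 \<le> degree E v \<Longrightarrow> v \<in> S"
  shows "disjoint_union_of_spiders k V E"
proof (rule disjoint_union_of_spiders_if_acyclic[OF graph acyclic])
  fix x y assume "(adj E)\<^sup>*\<^sup>* x y" "x \<in> V" "k + 2 \<le> degree E x" "k + 2 \<le> degree E y"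
  moreover have "y \<in> V" using rtranclp_adj_in_vertices[OF _ graph] calculation(1,2) .
  ultimately show "x = y" using connected_roots_eq assms by blast
qed

end

definition obs_time :: "'a set set \<Rightarrow> nat \<Rightarrow> 'a set \<Rightarrow> 'a \<Rightarrow> nat" where
  "obs_time E k S w = (LEAST i. w \<in> pow_obs E k i S)"

definition forcing_parent :: "'a set set \<Rightarrow> nat \<Rightarrow> 'a set \<Rightarrow> 'a \<Rightarrow> 'a \<Rightarrow> bool" where
  "forcing_parent E k S w v \<longleftrightarrow> adj E w v \<and>
     (case obs_time E k S w of
       0 \<Rightarrow> v \<in> S
     | Suc i \<Rightarrow> v \<in> pow_obs E k i S \<and> card (cnbhd E v - pow_obs E k i S) \<le> k)"

lemma obs_time_le: "w \<in> pow_obs E k i S \<Longrightarrow> obs_time E k S w \<le> i"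
  unfolding obs_time_def by (rule Least_le)

lemma mem_pow_obs_obs_time: "k_pds V E k S \<Longrightarrow> w \<in> V \<Longrightarrow> w \<in> pow_obs E k (obs_time E k S w) S"
  unfolding obs_time_def k_pds_def pow_obs_inf_def by (rule LeastI_ex) blast

lemma ex_forcing_parent:
  assumes S: "k_pds V E k S" and w: "w \<in> V" "w \<notin> S"
  shows "\<exists>v. forcing_parent E k S w v"
proof (cases "obs_time E k S w")
  case 0
  then obtain s where "s \<in> S" "w \<in> cnbhd E s"
    using mem_pow_obs_obs_time[OF S w(1)] by (auto simp: cnbhd_set_def)
  then have "adj E s w" using w(2) by (auto simp: cnbhd_def)
  then have "adj E w s" using adj_sym[of E w s] by simp
  then show ?thesis using 0 \<open>s \<in> S\<close> by (auto simp: forcing_parent_def)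
next
  case (Suc i)
  then obtain v where v: "v \<in> pow_obs E k i S" "card (cnbhd E v - pow_obs E k i S) \<le> k" "w \<in> cnbhd E v"
    using mem_pow_obs_obs_time[OF S w(1)] by (auto elim: mem_pow_obs_SucE)
  have "w \<notin> pow_obs E k i S" using obs_time_le[of w E k i S] Suc by auto
  then have "adj E v w" using v(1,3) by (auto simp: cnbhd_def)
  then have "adj E w v" using adj_sym[of E w v] by simp
  then show ?thesis using Suc v(1,2) by (auto simp: forcing_parent_def)
qed

locale forcing_parents =
  fixes V :: "'a set" and E :: "'a set set" and k :: nat and S :: "'a set" and par :: "'a \<Rightarrow> 'a"
  assumes graph: "simple_graph V E"
    and pds: "k_pds V E k S"
    and forcing: "\<And>w. w \<in> V \<Longrightarrow> w \<notin> S \<Longrightarrow> forcing_parent E k S w (par w)"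
begin

definition rank :: "'a \<Rightarrow> nat" where
  "rank w = obs_time E k S w + (if w \<in> S then 0 else 1)"

lemma adj_par: "w \<in> V \<Longrightarrow> w \<notin> S \<Longrightarrow> adj E w (par w)"
  using forcing by (simp add: forcing_parent_def)

lemma rank_par:
  assumes "w \<in> V" "w \<notin> S"
  shows "rank (par w) < rank w"
proof (cases "obs_time E k S w")
  case 0
  then have "par w \<in> S" using forcing[OF assms] by (simp add: forcing_parent_def)
  then have "obs_time E k S (par w) = 0" using obs_time_le[OF mem_pow_obs_0] by fastforce
  then show ?thesis using \<open>par w \<in> S\<close> assms(2) by (simp add: rank_def)
next
  case (Suc i)
  then have "par w \<in> pow_obs E k i S" using forcing[OF assms] by (simp add: forcing_parent_def)
  then have "obs_time E k S (par w) \<le> i" by (rule obs_time_le)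
  then show ?thesis using Suc assms(2) by (simp add: rank_def)
qed

lemma k_pds_if_parent_edges_kept:
  assumes "E' \<subseteq> E" and kept: "\<And>w. w \<in> V \<Longrightarrow> w \<notin> S \<Longrightarrow> {w, par w} \<in> E'"
  shows "k_pds V E' k S"
proof -
  let ?t = "obs_time E k S"
  have S_V: "S \<subseteq> V" using pds by (simp add: k_pds_def)
  have "\<forall>w\<in>V. ?t w = n \<longrightarrow> w \<in> pow_obs E' k n S" for n
  proof (induction n rule: less_induct)
    case (less n)
    have earlier: "pow_obs E k j S \<subseteq> pow_obs E' k j S" if "j < n" for j
    proof
      fix u assume u: "u \<in> pow_obs E k j S"
      then have "u \<in> V" "?t u \<le> j" using pow_obs_subset[OF graph S_V] obs_time_le[OF u] by blast+
      then show "u \<in> pow_obs E' k j S"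
        using less.IH[of "?t u"] pow_obs_mono[of "?t u" j E' k S] \<open>j < n\<close> by auto
    qed
    show ?case
    proof (intro ballI impI)
      fix w assume w: "w \<in> V" "?t w = n"
      show "w \<in> pow_obs E' k n S"
      proof (cases "w \<in> S")
        case True
        then show ?thesis using pow_obs_mono[of 0 n E' k S] mem_pow_obs_0 by (meson subsetD zero_le)
      next
        case False
        let ?v = "par w"
        have "w \<in> cnbhd E' ?v" using kept[OF w(1) False] by (simp add: cnbhd_def adj_def insert_commute)
        moreover have "cnbhd E' ?v \<subseteq> pow_obs E' k n S"
        proof (cases n)
          case 0
          then have "?v \<in> S" using forcing[OF w(1) False] w(2) by (simp add: forcing_parent_def)
          then show ?thesis using cnbhd_subset_pow_obs_0[of ?v S E' k] 0 by simp
        next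
          case (Suc j)
          then have v: "?v \<in> pow_obs E k j S" "card (cnbhd E ?v - pow_obs E k j S) \<le> k"
            using forcing[OF w(1) False] w(2) by (simp_all add: forcing_parent_def)
          have "pow_obs E k j S \<subseteq> pow_obs E' k j S" using earlier Suc by simp
          then have "cnbhd E' ?v - pow_obs E' k j S \<subseteq> cnbhd E ?v - pow_obs E k j S"
            using cnbhd_mono[OF \<open>E' \<subseteq> E\<close>, of ?v] by blast
          then have "card (cnbhd E' ?v - pow_obs E' k j S) \<le> k"
            using v(2) finite_cnbhd[OF graph] by (meson card_mono finite_Diff le_trans)
          moreover have "?v \<in> pow_obs E' k j S"
            using v(1) \<open>pow_obs E k j S \<subseteq> pow_obs E' k j S\<close> by (rule subsetD[rotated])
          ultimately show ?thesis using cnbhd_subset_pow_obs_Suc Suc by simp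
        qed
        ultimately show ?thesis by (rule subsetD[rotated])
      qed
    qed
  qed
  then show ?thesis
    by (intro k_pdsI[OF simple_graph_mono[OF graph \<open>E' \<subseteq> E\<close>] S_V])
      (use mem_pow_obs_obs_time[OF pds] in blast)
qed

lemma high_degree_in_pds:
  assumes parent_edge: "\<And>x y. adj E x y \<Longrightarrow> \<exists>w\<in>V. w \<notin> S \<and> {x, y} = {w, par w}"
    and v: "v \<in> V" "k + 2 \<le> degree E v"
  shows "v \<in> S"
proof (rule ccontr)
  assume "v \<notin> S"
  define children where "children = {y. adj E v y} - {par v}"
  have card_children: "card children = degree E v - 1"
    using adj_par[OF v(1) \<open>v \<notin> S\<close>] finite_neighbours[OF graph]
    by (simp add: children_def degree_def)
  have child: "y \<in> V \<and> y \<notin> S \<and> par y = v" if y: "y \<in> children" for y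
  proof -
    obtain w where "w \<in> V" "w \<notin> S" "{v, y} = {w, par w}"
      using parent_edge[of v y] y by (auto simp: children_def)
    then show ?thesis using y by (auto simp: children_def doubleton_eq_iff)
  qed
  have observed_by_v: "\<exists>j. obs_time E k S y = Suc j \<and> v \<in> pow_obs E k j S \<and> card (cnbhd E v - pow_obs E k j S) \<le> k"
    if "y \<in> children" for y
    using forcing[of y] child[OF that] \<open>v \<notin> S\<close>
    by (auto simp: forcing_parent_def split: nat.splits)
  obtain y0 where "y0 \<in> children" using card_children v(2) by fastforce
  define first where "first = arg_min (obs_time E k S) (\<lambda>y. y \<in> children)"
  have first: "first \<in> children" "\<And>y. y \<in> children \<Longrightarrow> obs_time E k S first \<le> obs_time E k S y"
    using arg_min_nat_lemma[of "\<lambda>y. y \<in> children", OF \<open>y0 \<in> children\<close>] by (simp_all add: first_def)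
  then obtain j where j: "obs_time E k S first = Suc j" "card (cnbhd E v - pow_obs E k j S) \<le> k"
    using observed_by_v by blast
  have "children \<subseteq> cnbhd E v - pow_obs E k j S"
  proof
    fix y assume "y \<in> children"
    then have "y \<notin> pow_obs E k j S" using first(2) j(1) obs_time_le by fastforce
    then show "y \<in> cnbhd E v - pow_obs E k j S" using \<open>y \<in> children\<close> by (simp add: children_def cnbhd_def)
  qed
  then have "card children \<le> k"
    using j(2) finite_cnbhd[OF graph] by (meson card_mono finite_Diff le_trans)
  then show False using card_children v(2) by simp
qed

end

lemma disjoint_union_of_spiders_imp_edge_critical:
  assumes "simple_graph V E" "disjoint_union_of_spiders k V E" "e \<in> E"
  shows "gamma_pk V E k < gamma_pk V (del_edge E e) k"
proof -
  obtain P where "\<Union>P = V" "\<forall>C\<in>P. \<forall>D\<in>P. C \<noteq> D \<longrightarrow> C \<inter> D = {}"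
    "\<forall>e\<in>E. \<exists>C\<in>P. e \<subseteq> C" "\<forall>C\<in>P. gen_spider k C (induced_edges E C)"
    using assms(2) unfolding disjoint_union_of_spiders_def by blast
  then interpret spider_partition k V E P
    using assms(1) by unfold_locales auto
  show ?thesis using gamma_pk_le_card_blocks card_blocks_less_gamma_pk_del_edge[OF assms(3)] by linarith
qed

lemma edge_critical_imp_disjoint_union_of_spiders:
  assumes graph: "simple_graph V E"
    and critical: "\<And>e. e \<in> E \<Longrightarrow> gamma_pk V E k < gamma_pk V (del_edge E e) k"
  shows "disjoint_union_of_spiders k V E"
proof -
  obtain S where S: "k_pds V E k S" "card S = gamma_pk V E k"
    using gamma_pk_attained[OF graph] .
  define par where "par w = (SOME v. forcing_parent E k S w v)" for w
  have "forcing_parent E k S w (par w)" if "w \<in> V" "w \<notin> S" for w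
    unfolding par_def using ex_forcing_parent[OF S(1) that] by (rule someI_ex)
  then interpret forcing_parents V E k S par
    using graph S(1) by unfold_locales
  have parent_edge: "\<exists>w\<in>V. w \<notin> S \<and> {x, y} = {w, par w}" if "adj E x y" for x y
  proof (rule ccontr)
    assume "\<not> ?thesis"
    then have "k_pds V (del_edge E {x, y}) k S"
      using adj_par by (intro k_pds_if_parent_edges_kept) (auto simp: del_edge_def adj_def)
    then have "gamma_pk V (del_edge E {x, y}) k \<le> gamma_pk V E k"
      using gamma_pk_le S(2) by metis
    then show False using critical[of "{x, y}"] that by (simp add: adj_def)
  qed
  interpret parent_forest V E S par rank
    using graph adj_par rank_par parent_edge by unfold_locales
  show ?thesis
    using disjoint_union_of_spiders_if_high_degree_in_roots high_degree_in_pds[OF parent_edge] by blast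
qed

theorem mainTheorem3:
  fixes V :: "'a set" and E :: "'a set set" and k :: nat
  assumes "simple_graph V E" and "k \<ge> 1"
  shows "(\<forall>e\<in>E. gamma_pk V (del_edge E e) k > gamma_pk V E k)
         \<longleftrightarrow> disjoint_union_of_spiders k V E"
  using edge_critical_imp_disjoint_union_of_spiders[OF assms(1)]
    disjoint_union_of_spiders_imp_edge_critical[OF assms(1)] by blast

end
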